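(* Let $n$ be even and let $G$ be a $k$-regular graph on $n$ vertices with $\mu(G)<k$. Then $n\ge 3k-2$. If moreover $n\le 3k-1$, then $\mu(G)=k-1$.
   Context: All graphs are finite and simple. For a graph $G=(V,E)$ on $n$ vertices, a fractional vertex cover is a function $f:V\to[0,\infty)$ with $f(u)+f(v)\ge 1$ for every edge $uv\in E$; $\tau^*(G)$ denotes the minimum of $\sum_{v\in V}f(v)$ over all fractional vertex covers. For $E'\subseteq E$ let $G-E'=(V,E\setminus E')$. Define $\mu(G)=\min\{|E'| : E'\subseteq E,\ \tau^*(G-E')<n/2\}$. *)

theory Defs
  imports Main "HOL.Real"
begin

definition simple_graph :: "'a set \<Rightarrow> 'a set set \<Rightarrow> bool" where
  "simple_graph V E \<longleftrightarrow> finite V \<and>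
     (\<forall>e\<in>E. \<exists>u v. u \<noteq> v \<and> u \<in> V \<and> v \<in> V \<and> e = {u, v})"

definition degree :: "'a set set \<Rightarrow> 'a \<Rightarrow> nat" where
  "degree E v = card {e \<in> E. v \<in> e}"

definition regular :: "'a set \<Rightarrow> 'a set set \<Rightarrow> nat \<Rightarrow> bool" where
  "regular V E k \<longleftrightarrow> (\<forall>v\<in>V. degree E v = k)"

definition frac_vertex_cover :: "'a set \<Rightarrow> 'a set set \<Rightarrow> ('a \<Rightarrow> real) \<Rightarrow> bool" where
  "frac_vertex_cover V E f \<longleftrightarrow> (\<forall>v\<in>V. f v \<ge> 0) \<and>
     (\<forall>u v. {u, v} \<in> E \<longrightarrow> f u + f v \<ge> 1)"

text \<open>Fractional vertex cover number (the minimum exists; we take the infimum).\<close>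
definition tau_star :: "'a set \<Rightarrow> 'a set set \<Rightarrow> real" where
  "tau_star V E = Inf {sum f V | f. frac_vertex_cover V E f}"

definition mu :: "'a set \<Rightarrow> 'a set set \<Rightarrow> nat" where
  "mu V E = (LEAST m. \<exists>E'\<subseteq>E. card E' = m \<and> tau_star V (E - E') < real (card V) / 2)"

end

theory Submission
  imports Defs
begin

(* Let E' realise mu(G). Since tau*(G - E') < n/2, thresholding a cheap fractional cover
   yields disjoint sets I, N with |N| < |I| such that every edge of G - E' leaving I ends in N.
   Counting edge ends in the k-regular graph G: k(|I| - |N|) <= 2|E'| < 2k forces
   |I| = |N| + 1; parity of n makes R = V - I - N nonempty, and counting at R forces |R| > k;
   counting at I forces |N| >= k - 2, and even |N| >= k - 1 unless |E'| = k - 1.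
   Hence n = 2|N| + 1 + |R| >= 3k - 2, and n >= 3k whenever mu(G) <= k - 2. *)

lemma eq_add_one_if_mult_diff_le:
  fixes k m s t :: int
  assumes "t < s" "0 \<le> m" "m < k" "k * (s - t) \<le> 2 * m"
  shows "s = t + 1"
proof (rule ccontr)
  assume "s \<noteq> t + 1"
  then have "k * 2 \<le> k * (s - t)" using assms by (intro mult_left_mono) auto
  then show False using assms by linarith
qed

lemma gt_if_quadratic_excess:
  fixes k m r :: int
  assumes "0 < r" "m < k" "k * r + k \<le> r * (r - 1) + 2 * m"
  shows "k < r"
proof -
  have "0 < (r - 1) * (r - k)" using assms by (simp add: algebra_simps)
  then show ?thesis using \<open>0 < r\<close> by (simp add: zero_less_mult_iff)
qed

lemma ge_minus_two_with_tight_case: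
  fixes k m t A :: int
  assumes "0 \<le> t" "m < k" "A \<le> m" "2 * A \<le> (t + 1) * t"
    and "k * (t + 1) \<le> (t + 1) * t + A + m"
  shows "k - 2 \<le> t \<and> (t \<le> k - 2 \<longrightarrow> m = k - 1)"
proof (cases "k - 2 < t")
  case False
  have "(t + 1) * (k - t) \<le> A + m" using assms(5) by (simp add: algebra_simps)
  moreover have "(t + 1) * (k - t) = 2 * (k - 1) + (t - 1) * (k - 2 - t)"
    by (simp add: algebra_simps)
  moreover have "t \<noteq> 0"
  proof
    assume "t = 0"
    then show False using assms by simp
  qed
  then have "0 \<le> (t - 1) * (k - 2 - t)" using False \<open>0 \<le> t\<close> by simp
  moreover have "m \<le> k - 1" using assms(2) by simp
  ultimately have "(t - 1) * (k - 2 - t) = 0" "A = m" "m = k - 1" using assms(3) by arith+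
  moreover have "t = 1 \<Longrightarrow> A \<le> 1" using assms(4) by simp
  ultimately show ?thesis by auto
qed auto

definition pos_tails_dominate :: "'a set \<Rightarrow> ('a \<Rightarrow> real) \<Rightarrow> bool" where
  "pos_tails_dominate V g \<longleftrightarrow> (\<forall>z>0. card {v\<in>V. g v \<le> -z} \<le> card {v\<in>V. z \<le> g v})"

lemma pos_tails_dominate_Diff_pair:
  assumes fin: "finite V" and dom: "pos_tails_dominate V g"
    and u: "u \<in> V" "\<forall>v\<in>V. g u \<le> g v" and w: "w \<in> V" "- g u \<le> g w" "g u < 0"
  shows "pos_tails_dominate (V - {u, w}) g"
  unfolding pos_tails_dominate_def
proof (intro allI impI)
  fix z :: real assume "0 < z"
  show "card {v \<in> V - {u, w}. g v \<le> - z} \<le> card {v \<in> V - {u, w}. z \<le> g v}"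
  proof (cases "z \<le> - g u")
    case True
    have "{v \<in> V - {u, w}. g v \<le> - z} = {v\<in>V. g v \<le> - z} - {u}"
      "{v \<in> V - {u, w}. z \<le> g v} = {v\<in>V. z \<le> g v} - {w}"
      using u w \<open>0 < z\<close> True by auto
    moreover have "u \<in> {v\<in>V. g v \<le> - z}" "w \<in> {v\<in>V. z \<le> g v}" using u w True by auto
    ultimately show ?thesis
      using fin dom \<open>0 < z\<close> by (simp add: pos_tails_dominate_def card_Diff_singleton diff_le_mono)
  next
    case False
    then have "{v \<in> V - {u, w}. g v \<le> - z} = {}" using u by force
    then show ?thesis by (metis card.empty zero_le)
  qed
qed

text \<open>Pair the most negative value with a value at least as large in absolute value, and recurse.\<close>
lemma sum_nonneg_if_pos_tails_dominate:
  "finite V \<Longrightarrow> pos_tails_dominate V g \<Longrightarrow> 0 \<le> sum g V"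
proof (induction "card V" arbitrary: V rule: less_induct)
  case less
  show ?case
  proof (cases "\<forall>v\<in>V. 0 \<le> g v")
    case True
    then show ?thesis by (simp add: sum_nonneg)
  next
    case False
    have "V \<noteq> {}" using False by blast
    obtain u where u: "u \<in> V" "\<forall>v\<in>V. g u \<le> g v"
      using arg_min_if_finite[OF less.prems(1) \<open>V \<noteq> {}\<close>, of g] by (meson not_less)
    then have "g u < 0" using False by force
    then have "card {v\<in>V. g v \<le> - (- g u)} \<le> card {v\<in>V. - g u \<le> g v}"
      using less.prems(2) unfolding pos_tails_dominate_def by (metis neg_0_less_iff_less)
    moreover have "0 < card {v\<in>V. g v \<le> - (- g u)}"
      using u less.prems(1) by (auto simp: card_gt_0_iff)
    ultimately have "{v\<in>V. - g u \<le> g v} \<noteq> {}" by (metis card.empty not_less)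
    then obtain w where w: "w \<in> V" "- g u \<le> g w" by blast
    have "w \<noteq> u" using w \<open>g u < 0\<close> by auto
    have "0 \<le> sum g (V - {u, w})"
    proof (rule less.hyps)
      show "card (V - {u, w}) < card V"
        using less.prems(1) u w by (intro psubset_card_mono) auto
      show "pos_tails_dominate (V - {u, w}) g"
        using pos_tails_dominate_Diff_pair[OF less.prems u w \<open>g u < 0\<close>] .
    qed (use less.prems(1) in simp)
    moreover have "sum g V = g u + g w + sum g (V - {u, w})"
      using less.prems(1) u w \<open>w \<noteq> u\<close> by (simp add: sum.remove flip: Diff_insert2)
    ultimately show ?thesis using w by linarith
  qed
qed

lemma exists_threshold_if_sum_less_half:
  fixes f :: "'a \<Rightarrow> real"
  assumes "finite V" "sum f V < card V / 2"
  shows "\<exists>y < 1/2. card {v\<in>V. 1 - y \<le> f v} < card {v\<in>V. f v \<le> y}"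
proof (rule ccontr)
  assume none: "\<not> ?thesis"
  have "pos_tails_dominate V (\<lambda>v. f v - 1/2)"
    unfolding pos_tails_dominate_def
  proof (intro allI impI)
    fix z :: real assume "0 < z"
    then have "1/2 - z < 1/2" by simp
    then have "\<not> card {v\<in>V. 1 - (1/2 - z) \<le> f v} < card {v\<in>V. f v \<le> 1/2 - z}"
      using none by blast
    then show "card {v\<in>V. f v - 1/2 \<le> - z} \<le> card {v\<in>V. z \<le> f v - 1/2}"
      by (simp add: algebra_simps)
  qed
  then have "0 \<le> (\<Sum>v\<in>V. f v - 1/2)" by (rule sum_nonneg_if_pos_tails_dominate[OF assms(1)])
  then show False using assms(2) by (simp add: sum_subtractf)
qed

lemma frac_vertex_cover_sum_less:
  assumes "tau_star V H < c"
  obtains f where "frac_vertex_cover V H f" "sum f V < c"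
proof -
  have "frac_vertex_cover V H (\<lambda>_. 1)" unfolding frac_vertex_cover_def by simp
  then have "{sum f V | f. frac_vertex_cover V H f} \<noteq> {}" by blast
  from cInf_lessD[OF this] obtain x where "x \<in> {sum f V | f. frac_vertex_cover V H f}" "x < c"
    using assms unfolding tau_star_def by blast
  then show ?thesis using that by blast
qed

text \<open>I is independent in H and N contains all neighbours of I, yet is smaller: the Hall-type
  obstruction to tau* = |V|/2.\<close>
definition deficient_pair :: "'a set \<Rightarrow> 'a set set \<Rightarrow> 'a set \<Rightarrow> 'a set \<Rightarrow> bool" where
  "deficient_pair V H I N \<longleftrightarrow> I \<subseteq> V \<and> N \<subseteq> V \<and> I \<inter> N = {} \<and> card N < card I \<and>
     (\<forall>u v. {u, v} \<in> H \<longrightarrow> u \<in> I \<longrightarrow> v \<in> N)"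

text \<open>Threshold a fractional cover of weight below |V|/2: vertices of weight at most y
  have all their neighbours among the vertices of weight at least 1 - y.\<close>
lemma deficient_pair_if_tau_star_less_half:
  assumes "finite V" "\<forall>e\<in>H. e \<subseteq> V" "tau_star V H < card V / 2"
  obtains I N where "deficient_pair V H I N"
proof -
  obtain f where f: "frac_vertex_cover V H f" "sum f V < card V / 2"
    using assms(3) by (rule frac_vertex_cover_sum_less)
  then obtain y where y: "y < 1/2" "card {v\<in>V. 1 - y \<le> f v} < card {v\<in>V. f v \<le> y}"
    using exists_threshold_if_sum_less_half assms(1) by blast
  have "v \<in> V \<and> 1 - y \<le> f v" if "{u, v} \<in> H" "f u \<le> y" for u v
  proof
    show "v \<in> V" using that(1) assms(2) by blast
    have "1 \<le> f u + f v" using that(1) f(1) unfolding frac_vertex_cover_def by blast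
    then show "1 - y \<le> f v" using that(2) by linarith
  qed
  then have "deficient_pair V H {v\<in>V. f v \<le> y} {v\<in>V. 1 - y \<le> f v}"
    unfolding deficient_pair_def using y by auto
  then show ?thesis by (rule that)
qed

lemma two_mult_card_edges_within_le:
  assumes "finite X" "\<forall>e\<in>E. card e = 2"
  shows "2 * int (card {e\<in>E. e \<subseteq> X}) \<le> int (card X) * (int (card X) - 1)"
proof -
  have "card {e\<in>E. e \<subseteq> X} \<le> card {Y. Y \<subseteq> X \<and> card Y = 2}"
    using assms by (intro card_mono) auto
  also have "\<dots> = card X choose 2" using n_subsets[OF assms(1)] by simp
  finally have "2 * card {e\<in>E. e \<subseteq> X} \<le> card X * (card X - 1)"
    by (simp add: choose_two dvd_mult_div_cancel)
  moreover have "int (card X * (card X - 1)) = int (card X) * (int (card X) - 1)"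
    by (cases "card X") (simp_all add: algebra_simps)
  ultimately show ?thesis by (metis of_nat_le_iff of_nat_mult of_nat_numeral)
qed

lemma card_edges_across_le:
  assumes "finite I" "finite N" "I \<inter> N = {}" "\<forall>e\<in>E. card e = 2"
  shows "card {e\<in>E. e \<inter> I \<noteq> {} \<and> e \<inter> N \<noteq> {}} \<le> card I * card N"
proof -
  have "{e\<in>E. e \<inter> I \<noteq> {} \<and> e \<inter> N \<noteq> {}} \<subseteq> (\<lambda>(a, b). {a, b}) ` (I \<times> N)"
  proof
    fix e assume "e \<in> {e\<in>E. e \<inter> I \<noteq> {} \<and> e \<inter> N \<noteq> {}}"
    then obtain a b where "a \<in> e \<inter> I" "b \<in> e \<inter> N" "card e = 2" using assms(4) by blast
    moreover have "a \<noteq> b" using calculation assms(3) by blast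
    ultimately have "e = {a, b}" by (auto simp: card_2_iff)
    then show "e \<in> (\<lambda>(a, b). {a, b}) ` (I \<times> N)" using \<open>a \<in> e \<inter> I\<close> \<open>b \<in> e \<inter> N\<close> by blast
  qed
  then have "card {e\<in>E. e \<inter> I \<noteq> {} \<and> e \<inter> N \<noteq> {}} \<le> card ((\<lambda>(a, b). {a, b}) ` (I \<times> N))"
    using assms(1,2) by (intro card_mono) auto
  also have "\<dots> \<le> card (I \<times> N)" by (rule card_image_le) (use assms(1,2) in simp)
  finally show ?thesis by (simp add: card_cartesian_product)
qed

locale deficient_subgraph =
  fixes V :: "'a set" and E E' :: "'a set set" and k :: nat and I N :: "'a set"
  assumes graph: "simple_graph V E" and regular: "regular V E k" and removed: "E' \<subseteq> E"
    and deficient: "deficient_pair V (E - E') I N"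
begin

abbreviation R :: "'a set" where "R \<equiv> V - I - N"

lemma finite_V: "finite V"
  using graph unfolding simple_graph_def by simp

lemma edge_cases:
  assumes "e \<in> E"
  obtains u v where "u \<noteq> v" "u \<in> V" "v \<in> V" "e = {u, v}"
    "e \<notin> E' \<Longrightarrow> (u \<in> I \<longrightarrow> v \<in> N) \<and> (v \<in> I \<longrightarrow> u \<in> N)"
proof -
  obtain u v where uv: "u \<noteq> v" "u \<in> V" "v \<in> V" "e = {u, v}"
    using graph assms unfolding simple_graph_def by blast
  moreover have "e \<notin> E' \<Longrightarrow> (u \<in> I \<longrightarrow> v \<in> N) \<and> (v \<in> I \<longrightarrow> u \<in> N)"
    using deficient assms uv(4) unfolding deficient_pair_def by (metis DiffI insert_commute)
  ultimately show ?thesis by (rule that)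
qed

lemma card_edge: "e \<in> E \<Longrightarrow> card e = 2"
  by (elim edge_cases) simp_all

lemma finite_E: "finite E"
proof (rule finite_subset)
  show "E \<subseteq> Pow V" by (auto elim: edge_cases)
qed (simp add: finite_V)

lemma deficient_sets:
  "I \<subseteq> V" "N \<subseteq> V" "I \<inter> N = {}" "card N < card I"
  using deficient unfolding deficient_pair_def by auto

lemma finite_subsets: "finite I" "finite N" "finite R"
  using deficient_sets finite_V by (auto intro: finite_subset)

lemma sum_card_Int:
  assumes "X \<subseteq> V"
  shows "(\<Sum>e\<in>E. int (card (e \<inter> X))) = int k * int (card X)"
proof -
  have "finite X" using assms finite_V by (rule finite_subset)
  have "(\<Sum>e\<in>E. int (card (e \<inter> X))) = (\<Sum>e\<in>E. \<Sum>v\<in>X. of_bool (v \<in> e))"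
    using \<open>finite X\<close> by (simp add: Int_def conj_commute)
  also have "\<dots> = (\<Sum>v\<in>X. \<Sum>e\<in>E. of_bool (v \<in> e))" by (rule sum.swap)
  also have "\<dots> = (\<Sum>v\<in>X. int (degree E v))"
    using finite_E by (simp add: degree_def Int_def)
  also have "\<dots> = (\<Sum>v\<in>X. int k)"
    using regular assms unfolding regular_def by (intro sum.cong) auto
  finally show ?thesis by simp
qed

lemma sum_of_bool_removed: "(\<Sum>e\<in>E. of_bool (e \<in> E')) = int (card E')"
  using finite_E removed by (simp add: Int_absorb1 Int_def[symmetric])

lemma card_edges_within_R: "2 * int (card {e\<in>E. e \<subseteq> R}) \<le> int (card R) * (int (card R) - 1)"
  using finite_subsets(3) card_edge by (intro two_mult_card_edges_within_le) auto

lemma edge_contributions: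
  assumes "e \<in> E"
  shows "int (card (e \<inter> I)) - int (card (e \<inter> N)) \<le> 2 * of_bool (e \<in> E')"
    and "int (card (e \<inter> R)) + int (card (e \<inter> I)) - int (card (e \<inter> N))
           \<le> 2 * of_bool (e \<subseteq> R) + 2 * of_bool (e \<in> E')"
    and "int (card (e \<inter> I))
           \<le> of_bool (e \<inter> I \<noteq> {} \<and> e \<inter> N \<noteq> {}) + of_bool (e \<subseteq> I) + of_bool (e \<in> E')"
    and "e \<subseteq> I \<Longrightarrow> e \<in> E'"
  using assms
  by (elim edge_cases, insert deficient_sets(3),
      (cases "u \<in> I"; cases "v \<in> I"; cases "u \<in> N"; cases "v \<in> N"; cases "e \<in> E'";
       auto simp: Int_insert_left))+

lemma boundary_count: "int k * (int (card I) - int (card N)) \<le> 2 * int (card E')"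
proof -
  have "(\<Sum>e\<in>E. int (card (e \<inter> I)) - int (card (e \<inter> N))) \<le> (\<Sum>e\<in>E. 2 * of_bool (e \<in> E'))"
    by (rule sum_mono) (rule edge_contributions(1))
  then show ?thesis
    using sum_card_Int deficient_sets sum_of_bool_removed
    by (simp add: sum_subtractf sum_distrib_left[symmetric] right_diff_distrib)
qed

lemma outside_count:
  "int k * int (card R) + int k * (int (card I) - int (card N))
     \<le> int (card R) * (int (card R) - 1) + 2 * int (card E')"
proof -
  have "(\<Sum>e\<in>E. int (card (e \<inter> R)) + int (card (e \<inter> I)) - int (card (e \<inter> N)))
      \<le> (\<Sum>e\<in>E. 2 * of_bool (e \<subseteq> R) + 2 * of_bool (e \<in> E'))"
    by (rule sum_mono) (rule edge_contributions(2))
  moreover have "(\<Sum>e\<in>E. int (card (e \<inter> R))) = int k * int (card R)"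
    by (rule sum_card_Int) blast
  ultimately have "int k * int (card R) + int k * (int (card I) - int (card N))
      \<le> 2 * int (card {e\<in>E. e \<subseteq> R}) + 2 * int (card E')"
    using sum_card_Int deficient_sets sum_of_bool_removed finite_E
    by (simp add: sum.distrib sum_subtractf sum_distrib_left[symmetric] right_diff_distrib Int_def)
  then show ?thesis using card_edges_within_R by linarith
qed

lemma inside_count:
  "int k * int (card I)
     \<le> int (card I) * int (card N) + int (card {e\<in>E. e \<subseteq> I}) + int (card E')"
proof -
  have "(\<Sum>e\<in>E. int (card (e \<inter> I)))
      \<le> (\<Sum>e\<in>E. of_bool (e \<inter> I \<noteq> {} \<and> e \<inter> N \<noteq> {}) + of_bool (e \<subseteq> I) + of_bool (e \<in> E'))"
    by (rule sum_mono) (rule edge_contributions(3))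
  then have "int k * int (card I)
      \<le> int (card {e\<in>E. e \<inter> I \<noteq> {} \<and> e \<inter> N \<noteq> {}}) + int (card {e\<in>E. e \<subseteq> I}) + int (card E')"
    using sum_card_Int deficient_sets sum_of_bool_removed finite_E by (simp add: sum.distrib Int_def)
  moreover have "card {e\<in>E. e \<inter> I \<noteq> {} \<and> e \<inter> N \<noteq> {}} \<le> card I * card N"
    using finite_subsets deficient_sets card_edge by (intro card_edges_across_le) auto
  ultimately show ?thesis by (smt (verit) of_nat_mono of_nat_mult)
qed

lemma card_edges_within_I:
  "card {e\<in>E. e \<subseteq> I} \<le> card E'"
  "2 * int (card {e\<in>E. e \<subseteq> I}) \<le> int (card I) * (int (card I) - 1)"
proof -
  have "{e\<in>E. e \<subseteq> I} \<subseteq> E'" using edge_contributions(4) by blast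
  then show "card {e\<in>E. e \<subseteq> I} \<le> card E'"
    using finite_E removed by (intro card_mono) (auto intro: finite_subset)
  show "2 * int (card {e\<in>E. e \<subseteq> I}) \<le> int (card I) * (int (card I) - 1)"
    using finite_subsets(1) card_edge by (intro two_mult_card_edges_within_le) auto
qed

lemma card_V_eq: "card V = card I + card N + card R"
proof -
  have "V = (I \<union> N) \<union> R" using deficient_sets by auto
  moreover have "card ((I \<union> N) \<union> R) = card (I \<union> N) + card R"
    using finite_subsets by (intro card_Un_disjoint) auto
  moreover have "card (I \<union> N) = card I + card N"
    by (intro card_Un_disjoint finite_subsets deficient_sets(3))
  ultimately show ?thesis by simp
qed

lemma card_V_bounds:
  assumes "even (card V)" "card E' < k"
  shows "3 * k - 2 \<le> card V \<and> (card E' \<le> k - 2 \<longrightarrow> 3 * k \<le> card V)"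
proof -
  define s t r m A where "s = int (card I)" and "t = int (card N)" and "r = int (card R)"
    and "m = int (card E')" and "A = int (card {e\<in>E. e \<subseteq> I})"
  note counts = s_def t_def r_def m_def A_def
  have boundary: "int k * (s - t) \<le> 2 * m" using boundary_count unfolding counts .
  have outside: "int k * r + int k * (s - t) \<le> r * (r - 1) + 2 * m" using outside_count unfolding counts .
  have inside: "int k * s \<le> s * t + A + m" using inside_count unfolding counts .
  have inner_edges: "A \<le> m" "2 * A \<le> s * (s - 1)" using card_edges_within_I unfolding counts by simp_all
  have m_less: "m < int k" using assms(2) unfolding m_def by simp
  have nonneg: "0 \<le> t" "0 \<le> m" "0 \<le> r" unfolding counts by simp_all
  have st: "s = t + 1"
    using eq_add_one_if_mult_diff_le[OF _ nonneg(2) m_less boundary] deficient_sets(4) unfolding counts by simp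
  have "2 \<le> k" using boundary m_less unfolding st by simp
  have card_V: "int (card V) = s + t + r" unfolding counts by (simp only: card_V_eq of_nat_add)
  have "even (s + t + r)" using assms(1) unfolding card_V[symmetric] by (simp only: even_of_nat_iff)
  then have "0 < r" using nonneg(3) unfolding st by presburger
  then have "int k < r" using gt_if_quadratic_excess m_less outside unfolding st by simp
  moreover have "int k - 2 \<le> t \<and> (t \<le> int k - 2 \<longrightarrow> m = int k - 1)"
    using ge_minus_two_with_tight_case[OF nonneg(1) m_less inner_edges(1)] inner_edges(2) inside unfolding st by (simp add: algebra_simps)
  ultimately show ?thesis using card_V \<open>2 \<le> k\<close> unfolding st m_def by linarith
qed

end

lemma mu_witness:
  assumes "\<exists>E'\<subseteq>E. tau_star V (E - E') < real (card V) / 2"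
  obtains E' where "E' \<subseteq> E" "card E' = mu V E" "tau_star V (E - E') < real (card V) / 2"
proof -
  let ?removable = "\<lambda>m. \<exists>E'\<subseteq>E. card E' = m \<and> tau_star V (E - E') < real (card V) / 2"
  have "?removable (LEAST m. ?removable m)" by (rule LeastI_ex) (use assms in blast)
  then show ?thesis using that unfolding mu_def by blast
qed

theorem lemma27:
  fixes V :: "'a set" and E :: "'a set set" and k :: nat
  assumes "simple_graph V E"
    and "even (card V)"
    and "regular V E k"
    and "\<exists>E'\<subseteq>E. tau_star V (E - E') < real (card V) / 2"
    and "mu V E < k"
  shows "card V \<ge> 3 * k - 2 \<and> (card V \<le> 3 * k - 1 \<longrightarrow> mu V E = k - 1)"
proof -
  obtain E' where E': "E' \<subseteq> E" "card E' = mu V E" "tau_star V (E - E') < real (card V) / 2"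
    using assms(4) by (rule mu_witness)
  have "finite V" "\<forall>e\<in>E - E'. e \<subseteq> V" using assms(1) unfolding simple_graph_def by auto
  then obtain I N where "deficient_pair V (E - E') I N"
    using E'(3) by (rule deficient_pair_if_tau_star_less_half)
  then interpret deficient_subgraph V E E' k I N
    using assms(1,3) E'(1) by unfold_locales
  have "3 * k - 2 \<le> card V \<and> (card E' \<le> k - 2 \<longrightarrow> 3 * k \<le> card V)"
    using assms(2,5) E'(2) by (intro card_V_bounds) simp_all
  then show ?thesis using E'(2) assms(5) by arith
qed

end
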